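(* Let $G$ be a simple graph with $n$ vertices, let $\theta_1(G),\ldots,\theta_n(G)$ be the eigenvalues of its Seidel matrix $S(G)$, and let $\theta_1(K_n),\ldots,\theta_n(K_n)$ be the eigenvalues of the Seidel matrix of the complete graph $K_n$. Then (i) $\theta_1(G)^2+\cdots+\theta_n(G)^2=(n-1)^2+n-1$; (ii) $\theta_1(G)^4+\cdots+\theta_n(G)^4\le \theta_1(K_n)^4+\cdots+\theta_n(K_n)^4=(n-1)^4+n-1$; (iii) $\max_{1\le i\le n}\theta_i(G)^2\le \max_{1\le i\le n}\theta_i(K_n)^2=(n-1)^2$.
   Context: For a simple graph $G$ with vertex set $\{v_1,\ldots,v_n\}$, the Seidel matrix $S(G)=(s_{ij})$ is the $n\times n$ matrix with $s_{ii}=0$ for all $i$, and for $i\ne j$, $s_{ij}=-1$ if $v_i$ and $v_j$ are adjacent and $s_{ij}=1$ otherwise. Its eigenvalues are real. $K_n$ denotes the complete graph on $n$ vertices, whose Seidel matrix is $I-J$. *)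

theory Defs
  imports "Jordan_Normal_Form.Jordan_Normal_Form"
begin

definition simple_graph :: "nat \<Rightarrow> (nat \<Rightarrow> nat \<Rightarrow> bool) \<Rightarrow> bool" where
  "simple_graph n E \<longleftrightarrow> (\<forall>i<n. \<forall>j<n. E i j = E j i) \<and> (\<forall>i<n. \<not> E i i)"

definition seidel :: "nat \<Rightarrow> (nat \<Rightarrow> nat \<Rightarrow> bool) \<Rightarrow> real mat" where
  "seidel n E = mat n n (\<lambda>(i,j). if i = j then 0 else if E i j then -1 else 1)"

definition complete_adj :: "nat \<Rightarrow> nat \<Rightarrow> bool" where
  "complete_adj i j \<longleftrightarrow> i \<noteq> j"

text \<open>es is the list of eigenvalues of A, counted with algebraic multiplicity.\<close>
definition eigenvalue_list :: "real mat \<Rightarrow> real list \<Rightarrow> bool" where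
  "eigenvalue_list A es \<longleftrightarrow> char_poly A = (\<Prod>a\<leftarrow>es. [:- a, 1:])"

end

theory Submission
  imports Defs "Jordan_Normal_Form.Schur_Decomposition"
begin

text \<open>Power sums of eigenvalues are traces of matrix powers (triangularise by Schur). Every
  off-diagonal entry of a Seidel matrix S is \<open>\<plusminus>1\<close>, so \<open>S\<^sup>2\<close> has diagonal \<open>n - 1\<close>, giving (i);
  an off-diagonal entry of \<open>S\<^sup>2\<close> is a sum of \<open>n - 2\<close> terms \<open>\<plusminus>1\<close>, with all terms equal to 1 for
  \<open>K\<^sub>n\<close>, and \<open>tr S\<^sup>4\<close> is the sum of the squared entries of the symmetric matrix \<open>S\<^sup>2\<close>, giving (ii).
  For (iii), an eigenvalue is bounded by the maximal absolute row sum \<open>n - 1\<close>, and the all-ones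
  vector is an eigenvector of \<open>S(K\<^sub>n) = I - J\<close> for \<open>1 - n\<close>.\<close>

definition trace :: "'a::comm_ring_1 mat \<Rightarrow> 'a" where
  "trace A = (\<Sum>i<dim_row A. A $$ (i,i))"

lemma index_mult_mat_sum:
  assumes "A \<in> carrier_mat nr n" "B \<in> carrier_mat n nc" "i < nr" "j < nc"
  shows "(A * B) $$ (i,j) = (\<Sum>k<n. A $$ (i,k) * B $$ (k,j))"
  using assms by (auto simp: scalar_prod_def lessThan_atLeast0)

lemma trace_mult_comm:
  assumes A: "A \<in> carrier_mat n n" and B: "B \<in> carrier_mat n n"
  shows "trace (A * B) = trace (B * A)"
proof -
  have "trace (A * B) = (\<Sum>i<n. \<Sum>k<n. A $$ (i,k) * B $$ (k,i))"
    unfolding trace_def using A B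
    by (auto simp: index_mult_mat_sum[OF A B] simp del: index_mult_mat(1) intro!: sum.cong)
  also have "\<dots> = (\<Sum>k<n. \<Sum>i<n. B $$ (k,i) * A $$ (i,k))"
    by (subst sum.swap) (simp add: mult.commute)
  also have "\<dots> = trace (B * A)"
    unfolding trace_def using A B
    by (auto simp: index_mult_mat_sum[OF B A] simp del: index_mult_mat(1) intro!: sum.cong)
  finally show ?thesis .
qed

lemma trace_similar_mat_wit_pow:
  assumes A: "A \<in> carrier_mat n n" and wit: "similar_mat_wit A B P Q"
  shows "trace (A ^\<^sub>m k) = trace (B ^\<^sub>m k)"
proof -
  from similar_mat_witD2[OF A wit] have B: "B \<in> carrier_mat n n" and P: "P \<in> carrier_mat n n"
    and Q: "Q \<in> carrier_mat n n" and QP: "Q * P = 1\<^sub>m n" by auto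
  have Bk: "B ^\<^sub>m k \<in> carrier_mat n n" using B by simp
  have "trace (A ^\<^sub>m k) = trace (P * (B ^\<^sub>m k * Q))"
    using similar_mat_wit_pow_id[OF wit] assoc_mult_mat[OF P Bk Q] by simp
  also have "\<dots> = trace (B ^\<^sub>m k * Q * P)"
    using trace_mult_comm[OF P mult_carrier_mat[OF Bk Q]] .
  also have "B ^\<^sub>m k * Q * P = B ^\<^sub>m k"
    using assoc_mult_mat[OF Bk Q P] QP right_mult_one_mat[OF Bk] by simp
  finally show ?thesis .
qed

lemma upper_triangular_mult:
  assumes A: "A \<in> carrier_mat n n" and B: "B \<in> carrier_mat n n"
    and uA: "upper_triangular A" and uB: "upper_triangular B"
  shows "upper_triangular (A * B)" "i < n \<Longrightarrow> (A * B) $$ (i,i) = A $$ (i,i) * B $$ (i,i)"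
proof -
  have vanish: "A $$ (i,k) * B $$ (k,j) = 0" if "i < n" "k < n" "\<not> (i \<le> k \<and> k \<le> j)" for i j k
    using that upper_triangularD[OF uA, of k i] upper_triangularD[OF uB, of j k] A B
    by (cases "k < i") auto
  show "upper_triangular (A * B)"
  proof (rule upper_triangularI)
    fix i j assume "j < i" "i < dim_row (A * B)"
    then show "(A * B) $$ (i,j) = 0"
      using A B vanish
      by (auto simp: index_mult_mat_sum[OF A B] simp del: index_mult_mat(1) intro!: sum.neutral)
  qed
  assume i: "i < n"
  have "(A * B) $$ (i,i) = (\<Sum>k<n. if k = i then A $$ (i,i) * B $$ (i,i) else 0)"
    unfolding index_mult_mat_sum[OF A B i i] using i vanish by (intro sum.cong) auto
  also have "\<dots> = A $$ (i,i) * B $$ (i,i)" using i by simp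
  finally show "(A * B) $$ (i,i) = A $$ (i,i) * B $$ (i,i)" .
qed

lemma upper_triangular_pow:
  assumes A: "A \<in> carrier_mat n n" and uA: "upper_triangular A"
  shows "upper_triangular (A ^\<^sub>m k) \<and> (\<forall>i<n. (A ^\<^sub>m k) $$ (i,i) = (A $$ (i,i)) ^ k)"
proof (induction k)
  case 0
  then show ?case using A by auto
next
  case (Suc k)
  then show ?case
    using upper_triangular_mult[OF pow_carrier_mat[OF A, of k] A _ uA] by (simp add: power_commutes)
qed

lemma trace_pow_upper_triangular:
  assumes "B \<in> carrier_mat n n" "upper_triangular B"
  shows "trace (B ^\<^sub>m k) = (\<Sum>x\<leftarrow>diag_mat B. x ^ k)"
  using assms upper_triangular_pow[OF assms, of k]
  by (simp add: trace_def diag_mat_def sum_list_sum_nth atLeast0LessThan)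

lemma power_sum_eq_trace_pow:
  fixes A :: "'a::conjugatable_ordered_field mat"
  assumes A: "A \<in> carrier_mat n n" and es: "char_poly A = (\<Prod>a\<leftarrow>es. [:- a, 1:])"
  shows "(\<Sum>x\<leftarrow>es. x ^ k) = trace (A ^\<^sub>m k)"
proof -
  obtain B P Q where "schur_decomposition A es = (B,P,Q)" by (metis prod_cases3)
  from schur_decomposition[OF A es this] have wit: "similar_mat_wit A B P Q"
    and "upper_triangular B" and "diag_mat B = es" by auto
  moreover have "B \<in> carrier_mat n n" using similar_mat_witD2[OF A wit] by auto
  ultimately show ?thesis
    using trace_similar_mat_wit_pow[OF A wit] trace_pow_upper_triangular by metis
qed

lemma eigenvalue_iff_mem_eigenvalue_list:
  assumes "A \<in> carrier_mat n n" "eigenvalue_list A es"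
  shows "eigenvalue A x \<longleftrightarrow> x \<in> set es"
proof -
  have "poly (\<Prod>a\<leftarrow>es. [:- a, 1:]) x = 0 \<longleftrightarrow> x \<in> set es" for es :: "real list"
    by (induction es) auto
  with assms show ?thesis
    by (simp add: eigenvalue_root_char_poly eigenvalue_list_def)
qed

lemma eigenvalue_list_nonempty:
  assumes "A \<in> carrier_mat n n" "eigenvalue_list A es" "n \<ge> 1"
  shows "es \<noteq> []"
  using assms degree_monic_char_poly[OF assms(1)] by (auto simp: eigenvalue_list_def)

lemma trace_mult_self_symmetric:
  assumes A: "A \<in> carrier_mat n n" and sym: "transpose_mat A = A"
  shows "trace (A * A) = (\<Sum>i<n. \<Sum>j<n. (A $$ (i,j)) ^ 2)"
proof -
  have "A $$ (j,i) = A $$ (i,j)" if "i < n" "j < n" for i j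
    using that A arg_cong[OF sym, of "\<lambda>M. M $$ (i,j)"] by auto
  then show ?thesis
    using A by (auto simp: trace_def index_mult_mat_sum[OF A A] power2_eq_square
        simp del: index_mult_mat(1) intro!: sum.cong)
qed

lemma eigenvalue_abs_le_row_sum:
  fixes A :: "real mat"
  assumes A: "A \<in> carrier_mat n n" and ev: "eigenvalue A x"
    and rows: "\<And>i. i < n \<Longrightarrow> (\<Sum>j<n. \<bar>A $$ (i,j)\<bar>) \<le> r"
  shows "\<bar>x\<bar> \<le> r"
proof -
  from ev A obtain v where v: "v \<in> carrier_vec n" "v \<noteq> 0\<^sub>v n" and Av: "A *\<^sub>v v = x \<cdot>\<^sub>v v"
    unfolding eigenvalue_def eigenvector_def by auto
  have "\<exists>i<n. v $ i \<noteq> 0"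
    using v by (metis eq_vecI carrier_vecD index_zero_vec(1,2))
  then have ne: "{..<n} \<noteq> {}" by auto
  define M where "M = Max ((\<lambda>j. \<bar>v $ j\<bar>) ` {..<n})"
  have "M \<in> (\<lambda>j. \<bar>v $ j\<bar>) ` {..<n}"
    unfolding M_def using ne by (intro Max_in) auto
  then obtain i where i: "i < n" and Mi: "M = \<bar>v $ i\<bar>" by auto
  have Mj: "\<bar>v $ j\<bar> \<le> M" if "j < n" for j
    unfolding M_def using that by (intro Max_ge) auto
  have M0: "M > 0"
    using Mj \<open>\<exists>i<n. v $ i \<noteq> 0\<close> by (meson zero_less_abs_iff order_less_le_trans)
  have "\<bar>x\<bar> * M = \<bar>\<Sum>j<n. A $$ (i,j) * v $ j\<bar>"
    using arg_cong[OF Av, of "\<lambda>w. w $ i"] A v i Mi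
    by (auto simp: scalar_prod_def lessThan_atLeast0 abs_mult)
  also have "\<dots> \<le> (\<Sum>j<n. \<bar>A $$ (i,j)\<bar> * M)"
    by (rule order_trans[OF sum_abs sum_mono]) (auto simp: abs_mult intro: mult_left_mono Mj)
  also have "\<dots> \<le> r * M"
    using rows[OF i] M0 by (simp add: sum_distrib_right[symmetric])
  finally show ?thesis using M0 by simp
qed

lemma sum_if_mem_zero:
  assumes "S \<subseteq> {..<n}"
  shows "(\<Sum>k<n. if k \<in> S then 0 else c) = (real n - real (card S)) * (c::real)"
proof -
  have "finite S" using assms finite_subset by blast
  have "(\<Sum>k<n. if k \<in> S then 0 else c) = (\<Sum>k\<in>{..<n} - S. c)"
    by (simp add: sum.If_cases Diff_eq Int_commute)
  also have "\<dots> = (real n - real (card S)) * c"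
    using assms \<open>finite S\<close> card_mono[of "{..<n}" S] by (simp add: card_Diff_subset of_nat_diff)
  finally show ?thesis .
qed

lemma seidel_carrier [simp]: "seidel n E \<in> carrier_mat n n"
  by (simp add: seidel_def)

lemma dim_seidel [simp]: "dim_row (seidel n E) = n" "dim_col (seidel n E) = n"
  by (simp_all add: seidel_def)

lemma index_seidel [simp]:
  "i < n \<Longrightarrow> j < n \<Longrightarrow> seidel n E $$ (i,j) = (if i = j then 0 else if E i j then -1 else 1)"
  by (simp add: seidel_def)

lemma simple_graph_complete_adj: "simple_graph n complete_adj"
  by (auto simp: simple_graph_def complete_adj_def)

lemma transpose_seidel: "simple_graph n E \<Longrightarrow> transpose_mat (seidel n E) = seidel n E"
  by (rule eq_matI) (auto simp: simple_graph_def)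

lemma index_seidel_sq_diag:
  assumes "simple_graph n E" "i < n"
  shows "(seidel n E * seidel n E) $$ (i,i) = real n - 1"
proof -
  have "(seidel n E * seidel n E) $$ (i,i) = (\<Sum>k<n. if k \<in> {i} then 0 else 1)"
    using assms unfolding index_mult_mat_sum[OF seidel_carrier seidel_carrier assms(2,2)]
    by (intro sum.cong) (auto simp: simple_graph_def)
  then show ?thesis using sum_if_mem_zero[of "{i}" n 1] assms by simp
qed

lemma abs_index_seidel_sq_le:
  assumes "i < n" "j < n" "i \<noteq> j"
  shows "\<bar>(seidel n E * seidel n E) $$ (i,j)\<bar> \<le> real n - 2"
proof -
  have "\<bar>(seidel n E * seidel n E) $$ (i,j)\<bar>
    \<le> (\<Sum>k<n. \<bar>seidel n E $$ (i,k) * seidel n E $$ (k,j)\<bar>)"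
    unfolding index_mult_mat_sum[OF seidel_carrier seidel_carrier assms(1,2)] by (rule sum_abs)
  also have "\<dots> \<le> (\<Sum>k<n. if k \<in> {i,j} then 0 else 1)"
    using assms by (intro sum_mono) auto
  also have "\<dots> = real n - 2"
    using sum_if_mem_zero[of "{i,j}" n 1] assms by simp
  finally show ?thesis .
qed

lemma index_seidel_complete_sq:
  assumes "i < n" "j < n" "i \<noteq> j"
  shows "(seidel n complete_adj * seidel n complete_adj) $$ (i,j) = real n - 2"
proof -
  have "(seidel n complete_adj * seidel n complete_adj) $$ (i,j)
    = (\<Sum>k<n. if k \<in> {i,j} then 0 else 1)"
    using assms unfolding index_mult_mat_sum[OF seidel_carrier seidel_carrier assms(1,2)]
    by (intro sum.cong) (auto simp: complete_adj_def)
  then show ?thesis using sum_if_mem_zero[of "{i,j}" n 1] assms by simp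
qed

lemma trace_seidel_sq:
  assumes "simple_graph n E"
  shows "trace (seidel n E ^\<^sub>m 2) = real n * (real n - 1)"
proof -
  have "trace (seidel n E ^\<^sub>m 2) = trace (seidel n E * seidel n E)"
    by (simp add: numeral_eq_Suc)
  also have "\<dots> = (\<Sum>i<n. real n - 1)"
    unfolding trace_def using assms by (simp add: index_seidel_sq_diag del: index_mult_mat(1))
  finally show ?thesis by simp
qed

lemma trace_seidel_pow4:
  assumes "simple_graph n E"
  shows "trace (seidel n E ^\<^sub>m 4) = (\<Sum>i<n. \<Sum>j<n. ((seidel n E * seidel n E) $$ (i,j)) ^ 2)"
proof -
  let ?S = "seidel n E"
  have SS: "?S * ?S \<in> carrier_mat n n" using mult_carrier_mat[OF seidel_carrier seidel_carrier] .
  have "?S ^\<^sub>m 4 = (?S * ?S) * ?S * ?S" by (simp add: numeral_eq_Suc)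
  also have "\<dots> = (?S * ?S) * (?S * ?S)" using assoc_mult_mat[OF SS seidel_carrier seidel_carrier] .
  finally have "trace (?S ^\<^sub>m 4) = trace ((?S * ?S) * (?S * ?S))" by simp
  moreover have "transpose_mat (?S * ?S) = ?S * ?S"
    using transpose_mult[OF seidel_carrier seidel_carrier] transpose_seidel[OF assms] by simp
  ultimately show ?thesis using trace_mult_self_symmetric[OF SS] by simp
qed

lemma trace_seidel_pow4_le:
  assumes "simple_graph n E"
  shows "trace (seidel n E ^\<^sub>m 4) \<le> trace (seidel n complete_adj ^\<^sub>m 4)"
  unfolding trace_seidel_pow4[OF assms] trace_seidel_pow4[OF simple_graph_complete_adj]
proof (intro sum_mono)
  fix i j assume "i \<in> {..<n}" "j \<in> {..<n}"
  then consider "i = j" "i < n" | "i \<noteq> j" "i < n" "j < n" by auto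
  then show "((seidel n E * seidel n E) $$ (i,j))\<^sup>2
    \<le> ((seidel n complete_adj * seidel n complete_adj) $$ (i,j))\<^sup>2"
  proof cases
    case 1
    then show ?thesis
      using assms simple_graph_complete_adj
      by (simp add: index_seidel_sq_diag del: index_mult_mat(1))
  next
    case 2
    then have "\<bar>(seidel n E * seidel n E) $$ (i,j)\<bar> \<le> \<bar>real n - 2\<bar>"
      using abs_index_seidel_sq_le[of i n j E] by linarith
    then have "((seidel n E * seidel n E) $$ (i,j))\<^sup>2 \<le> (real n - 2)\<^sup>2"
      using abs_le_square_iff by blast
    then show ?thesis
      using 2 by (simp add: index_seidel_complete_sq del: index_mult_mat(1))
  qed
qed

lemma trace_seidel_complete_pow4:
  "trace (seidel n complete_adj ^\<^sub>m 4) = (real n - 1) ^ 4 + (real n - 1)"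
proof -
  let ?S = "seidel n complete_adj"
  have row: "(\<Sum>j<n. ((?S * ?S) $$ (i,j))\<^sup>2) = (real n - 1)\<^sup>2 + (real n - 1) * (real n - 2)\<^sup>2"
    if i: "i < n" for i
  proof -
    have "(\<Sum>j<n. ((?S * ?S) $$ (i,j))\<^sup>2)
      = (real n - 1)\<^sup>2 + (\<Sum>j<n. if j \<in> {i} then 0 else (real n - 2)\<^sup>2)"
      using i simple_graph_complete_adj
      by (simp add: sum.remove[of _ i] index_seidel_sq_diag index_seidel_complete_sq
          sum.If_cases Diff_eq Int_commute del: index_mult_mat(1))
    then show ?thesis using sum_if_mem_zero[of "{i}" n] i by simp
  qed
  have "trace (?S ^\<^sub>m 4) = (\<Sum>i<n. (real n - 1)\<^sup>2 + (real n - 1) * (real n - 2)\<^sup>2)"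
    unfolding trace_seidel_pow4[OF simple_graph_complete_adj] using row by simp
  also have "\<dots> = (real n - 1) ^ 4 + (real n - 1)"
    by (simp add: power2_eq_square power4_eq_xxxx algebra_simps)
  finally show ?thesis .
qed

lemma abs_seidel_eigenvalue_le:
  assumes "eigenvalue (seidel n E) x"
  shows "\<bar>x\<bar> \<le> real n - 1"
proof (rule eigenvalue_abs_le_row_sum[OF seidel_carrier assms])
  fix i assume i: "i < n"
  have "(\<Sum>j<n. \<bar>seidel n E $$ (i,j)\<bar>) = (\<Sum>j<n. if j \<in> {i} then 0 else 1)"
    using i by (intro sum.cong) auto
  then show "(\<Sum>j<n. \<bar>seidel n E $$ (i,j)\<bar>) \<le> real n - 1"
    using sum_if_mem_zero[of "{i}" n 1] i by simp
qed

lemma seidel_complete_eigenvalue: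
  assumes "n \<ge> 1"
  shows "eigenvalue (seidel n complete_adj) (1 - real n)"
proof -
  let ?v = "vec n (\<lambda>_. 1) :: real vec"
  have "(seidel n complete_adj *\<^sub>v ?v) $ i = (1 - real n) * ?v $ i" if i: "i < n" for i
  proof -
    have "(seidel n complete_adj *\<^sub>v ?v) $ i = (\<Sum>j<n. if j \<in> {i} then 0 else -1)"
      using i by (auto simp: scalar_prod_def atLeast0LessThan complete_adj_def intro!: sum.cong)
    then show ?thesis using sum_if_mem_zero[of "{i}" n "-1"] i by simp
  qed
  then have "seidel n complete_adj *\<^sub>v ?v = (1 - real n) \<cdot>\<^sub>v ?v"
    by (intro eq_vecI) auto
  moreover have "?v $ 0 \<noteq> 0\<^sub>v n $ 0"
    using assms by simp
  then have "?v \<noteq> 0\<^sub>v n" by metis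
  ultimately show ?thesis
    unfolding eigenvalue_def eigenvector_def by (auto intro!: exI[of _ ?v])
qed

theorem lemma3p1:
  fixes n :: nat and E :: "nat \<Rightarrow> nat \<Rightarrow> bool" and th thK :: "real list"
  assumes "n \<ge> 1
    \<and> simple_graph n E
    \<and> eigenvalue_list (seidel n E) th
    \<and> eigenvalue_list (seidel n complete_adj) thK"
  shows "(\<Sum>x\<leftarrow>th. x ^ 2) = (real n - 1) ^ 2 + (real n - 1)
    \<and> (\<Sum>x\<leftarrow>th. x ^ 4) \<le> (\<Sum>x\<leftarrow>thK. x ^ 4)
    \<and> (\<Sum>x\<leftarrow>thK. x ^ 4) = (real n - 1) ^ 4 + (real n - 1)
    \<and> Max ((\<lambda>x. x ^ 2) ` set th) \<le> Max ((\<lambda>x. x ^ 2) ` set thK)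
    \<and> Max ((\<lambda>x. x ^ 2) ` set thK) = (real n - 1) ^ 2"
proof -
  from assms have n: "n \<ge> 1" and G: "simple_graph n E"
    and th: "eigenvalue_list (seidel n E) th"
    and thK: "eigenvalue_list (seidel n complete_adj) thK" by auto
  have power_sum: "(\<Sum>x\<leftarrow>es. x ^ k) = trace (seidel n F ^\<^sub>m k)"
    if "eigenvalue_list (seidel n F) es" for F es k
    using that power_sum_eq_trace_pow[OF seidel_carrier] by (simp add: eigenvalue_list_def)
  have square_le: "x\<^sup>2 \<le> (real n - 1)\<^sup>2"
    if "eigenvalue_list (seidel n F) es" "x \<in> set es" for F es x
    using abs_seidel_eigenvalue_le[of n F x] n that abs_le_square_iff[of x "real n - 1"]
    by (simp add: eigenvalue_iff_mem_eigenvalue_list[OF seidel_carrier that(1)])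
  have "1 - real n \<in> set thK"
    using seidel_complete_eigenvalue[OF n] eigenvalue_iff_mem_eigenvalue_list[OF seidel_carrier thK]
    by blast
  then have max_K: "Max ((\<lambda>x. x ^ 2) ` set thK) = (real n - 1) ^ 2"
    using square_le[OF thK]
    by (intro antisym Max.boundedI Max_ge_iff[THEN iffD2]) (auto simp: power2_commute)
  have "Max ((\<lambda>x. x ^ 2) ` set th) \<le> (real n - 1) ^ 2"
    using square_le[OF th] eigenvalue_list_nonempty[OF seidel_carrier th n]
    by (intro Max.boundedI) auto
  moreover have "(\<Sum>x\<leftarrow>th. x ^ 2) = (real n - 1) ^ 2 + (real n - 1)"
    using power_sum[OF th, of 2] trace_seidel_sq[OF G]
    by (simp add: power2_eq_square algebra_simps)
  moreover have "(\<Sum>x\<leftarrow>th. x ^ 4) \<le> (\<Sum>x\<leftarrow>thK. x ^ 4)"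
    using power_sum[OF th, of 4] power_sum[OF thK, of 4] trace_seidel_pow4_le[OF G] by simp
  moreover have "(\<Sum>x\<leftarrow>thK. x ^ 4) = (real n - 1) ^ 4 + (real n - 1)"
    using power_sum[OF thK, of 4] trace_seidel_complete_pow4 by simp
  ultimately show ?thesis using max_K by simp
qed

end
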